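(* Let $q\in(0,1]$. Then $\mathrm{F\o l}^{\mathrm{inn}}(R(SU_q(2)))=1-q^2$ and $\mathrm{F\o l}(R(SU_q(2)))=q^{-2}-q^2$.
   Context: $R(SU_q(2))$ is the fusion algebra with irreducible objects $I=\mathbb{Z}_+=\{0,1,2,\dots\}$, unit $0$, trivial involution $\bar n=n$, product $m\cdot n=\sum_{k\in\{|m-n|,|m-n|+2,\dots,m+n\}}k$, and dimension function $d(n)=[n+1]_q$, where $[x]_q=\frac{q^{-x}-q^x}{q^{-1}-q}$ for $0<q<1$ and $[x]_1=x$. Write $\beta\subseteq r$ if $\beta$ has nonzero coefficient in $r$; $\mathrm{supp}(r)$ is the set of such $\beta$. For $A\subseteq I$, $|A|=\sum_{\beta\in A}d(\beta)^2$ and $A^c=I\setminus A$. A finite generating set is a finite $X\subseteq I$ (closed under the involution) such that every element of $I$ is contained in some product of elements of $X$. For finite $X,A\subseteq I$: $\partial_X(A)=\{\beta\in A:\exists x\in X,\ \mathrm{supp}(\beta x)\not\subseteq A\}\cup\{\beta\in A^c:\exists x\in X,\ \mathrm{supp}(\beta x)\not\subseteq A^c\}$ and $\partial^{\mathrm{inn}}_X(A)=\{\beta\in A:\exists x\in X,\ \mathrm{supp}(\beta x)\not\subseteq A\}$. Then $\mathrm{F\o l}_X=\inf_A|\partial_X A|/|A|$ and $\mathrm{F\o l}^{\mathrm{inn}}_X=\inf_A|\partial^{\mathrm{inn}}_X A|/|A|$ over nonempty finite $A\subseteq I$, and $\mathrm{F\o l}$, $\mathrm{F\o l}^{\mathrm{inn}}$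 are the infima of these over all finite generating sets $X$. *)

theory Defs
  imports Complex_Main
begin

text \<open>The fusion algebra R(SU_q(2)): irreducibles are the naturals, unit 0,
trivial involution.  All fusion coefficients are 0 or 1, so only supports matter.\<close>

definition qnum :: "real \<Rightarrow> real \<Rightarrow> real" where
  "qnum q x = (if q = 1 then x else (q powr (-x) - q powr x) / (q powr (-1) - q))"

definition dimq :: "real \<Rightarrow> nat \<Rightarrow> real" where
  "dimq q n = qnum q (real n + 1)"

definition supp_mult :: "nat \<Rightarrow> nat \<Rightarrow> nat set" where
  "supp_mult m n = {k. (if m \<le> n then n - m else m - n) \<le> k \<and> k \<le> m + n \<and> even (m + n + k)}"

text \<open>Support of the product of a finite list of irreducibles (empty product = unit 0).
Since all coefficients are nonnegative, the support of a product is the union of supports.\<close>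
fun supp_prod :: "nat list \<Rightarrow> nat set" where
  "supp_prod [] = {0}"
| "supp_prod (x # xs) = (\<Union>k\<in>supp_prod xs. supp_mult k x)"

definition gen_set :: "nat set \<Rightarrow> bool" where
  "gen_set X \<longleftrightarrow> finite X \<and> (\<forall>n. \<exists>xs. set xs \<subseteq> X \<and> n \<in> supp_prod xs)"

definition wsize :: "real \<Rightarrow> nat set \<Rightarrow> real" where
  "wsize q A = (\<Sum>b\<in>A. (dimq q b)^2)"

definition inner_bdry :: "nat set \<Rightarrow> nat set \<Rightarrow> nat set" where
  "inner_bdry X A = {b \<in> A. \<exists>x\<in>X. \<not> supp_mult b x \<subseteq> A}"

definition bdry :: "nat set \<Rightarrow> nat set \<Rightarrow> nat set" where
  "bdry X A = inner_bdry X A \<union> {b \<in> - A. \<exists>x\<in>X. \<not> supp_mult b x \<subseteq> - A}"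

definition Fol_X :: "real \<Rightarrow> nat set \<Rightarrow> real" where
  "Fol_X q X = Inf {wsize q (bdry X A) / wsize q A | A. finite A \<and> A \<noteq> {}}"

definition Fol_inn_X :: "real \<Rightarrow> nat set \<Rightarrow> real" where
  "Fol_inn_X q X = Inf {wsize q (inner_bdry X A) / wsize q A | A. finite A \<and> A \<noteq> {}}"

definition Fol :: "real \<Rightarrow> real" where
  "Fol q = Inf {Fol_X q X | X. gen_set X}"

definition Fol_inn :: "real \<Rightarrow> real" where
  "Fol_inn q = Inf {Fol_inn_X q X | X. gen_set X}"

end

theory Submission
  imports Defs
begin

text \<open>Write d(n) = dimq q n and |B(n)| = (\<Sum>k\<le>n. d(k)^2) for the weight of the ball
B(n) = {..n}. The recurrence q d(n+1) = d(n) + q^(n+2) gives d(k) \<le> q d(k+1), whence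
(1 - q^2) |B(n)| \<le> d(n)^2 and (q^-2 - q^2) |B(n)| \<le> d(n)^2 + d(n+1)^2. If A has maximum m
and the generating set contains some x \<noteq> 0, then m lies in the inner boundary of A, m + x in
the outer one, and A \<subseteq> B(m); this gives the lower bounds. Conversely, for the generator 1 the
ball B(n) has inner boundary {n} and boundary {n, n+1}, and the excess d(n)^2 - (1 - q^2) |B(n)|
is O(n^2) while |B(n)| \<ge> (n+1)^3/3, so the boundary ratios of the balls tend to the lower
bounds.\<close>

lemma cInf_le_lim:
  fixes S :: "real set"
  assumes "bdd_below S" "\<And>n. r n \<in> S" "\<And>n. r n \<le> b n" "b \<longlonglongrightarrow> a"
  shows "Inf S \<le> a"
proof (rule LIMSEQ_le_const[OF assms(4)])
  show "\<exists>N. \<forall>n\<ge>N. Inf S \<le> b n"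
    using cInf_lower[OF assms(2,1)] assms(3) order_trans by blast
qed

lemma tendsto_add_const_over_Suc: "(\<lambda>n. a + c / (real n + 1)) \<longlonglongrightarrow> a"
proof -
  have "(\<lambda>n. a + c / real (Suc n)) \<longlonglongrightarrow> a + 0"
    by (intro tendsto_add tendsto_const LIMSEQ_Suc[OF lim_const_over_n])
  then show ?thesis
    by (simp add: add.commute)
qed

section \<open>Supports of products and boundaries\<close>

lemma mem_supp_mult_le: "k \<in> supp_mult m n \<Longrightarrow> k \<le> m + n \<and> m \<le> k + n"
  by (auto simp: supp_mult_def split: if_splits)

lemma add_mem_supp_mult: "m + n \<in> supp_mult m n"
  by (auto simp: supp_mult_def)

lemma mem_supp_mult_add: "m \<in> supp_mult (m + n) n"
  by (auto simp: supp_mult_def)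

lemma supp_mult_zero: "supp_mult m 0 = {m}"
  by (auto simp: supp_mult_def)

lemma supp_prod_replicate_one: "n \<in> supp_prod (replicate n 1)"
proof (induction n)
  case (Suc n)
  then show ?case
    using add_mem_supp_mult[of n 1] by auto
qed simp

lemma gen_set_one: "gen_set {1}"
proof -
  have "set (replicate n 1) \<subseteq> {1} \<and> n \<in> supp_prod (replicate n 1)" for n
    using supp_prod_replicate_one[of n] by auto
  then show ?thesis
    unfolding gen_set_def by blast
qed

lemma gen_set_ex_nonzero:
  assumes "gen_set X"
  obtains x where "x \<in> X" and "x \<noteq> 0"
proof -
  obtain xs where xs: "set xs \<subseteq> X" "1 \<in> supp_prod xs"
    using assms unfolding gen_set_def by blast
  have "supp_prod ys = {0}" if "set ys \<subseteq> {0}" for ys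
    using that by (induction ys) (auto simp: supp_mult_zero)
  then have "\<not> set xs \<subseteq> {0}"
    using xs(2) by force
  then obtain x where "x \<in> set xs" "x \<noteq> 0"
    by blast
  then show ?thesis
    using that xs(1) by blast
qed

lemma Max_add_notin:
  fixes A :: "nat set"
  assumes "finite A" "x \<noteq> 0"
  shows "Max A + x \<notin> A"
proof
  assume "Max A + x \<in> A"
  then have "Max A + x \<le> Max A"
    using assms(1) by (rule Max_ge[rotated])
  then show False
    using assms(2) by simp
qed

lemma Max_mem_inner_bdry:
  assumes "finite A" "A \<noteq> {}" "x \<in> X" "x \<noteq> 0"
  shows "Max A \<in> inner_bdry X A"
  using assms Max_add_notin[of A x] add_mem_supp_mult[of "Max A" x]
  unfolding inner_bdry_def by auto

lemma Max_add_mem_bdry: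
  assumes "finite A" "A \<noteq> {}" "x \<in> X" "x \<noteq> 0"
  shows "Max A + x \<in> bdry X A"
proof -
  have "Max A \<in> supp_mult (Max A + x) x \<inter> A"
    using assms(1,2) mem_supp_mult_add[of "Max A" x] by simp
  then have "\<not> supp_mult (Max A + x) x \<subseteq> - A"
    by blast
  then show ?thesis
    using assms Max_add_notin[of A x] unfolding bdry_def by blast
qed

lemma bdry_outside_le:
  assumes "b \<in> bdry X A" "b \<notin> A"
  obtains x k where "x \<in> X" "k \<in> A" "b \<le> k + x"
proof -
  obtain x k where "x \<in> X" "k \<in> supp_mult b x" "k \<in> A"
    using assms unfolding bdry_def inner_bdry_def by blast
  then show ?thesis
    using that mem_supp_mult_le by blast
qed

lemma finite_bdry:
  assumes "finite A" "finite X"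
  shows "finite (bdry X A)"
proof -
  have "b \<in> A \<union> (\<Union>x\<in>X. \<Union>k\<in>A. {..k + x})" if b: "b \<in> bdry X A" for b
  proof (cases "b \<in> A")
    case False
    then obtain x k where "x \<in> X" "k \<in> A" "b \<le> k + x"
      by (rule bdry_outside_le[OF b])
    then show ?thesis
      by blast
  qed simp
  then have "bdry X A \<subseteq> A \<union> (\<Union>x\<in>X. \<Union>k\<in>A. {..k + x})"
    by blast
  then show ?thesis
    by (rule finite_subset) (simp add: assms)
qed

lemma inner_bdry_one_atMost: "inner_bdry {1} {..n} \<subseteq> {n}"
proof
  fix b
  assume "b \<in> inner_bdry {1} {..n}"
  then obtain k where "b \<le> n" "k \<in> supp_mult b 1" "\<not> k \<le> n"
    unfolding inner_bdry_def by blast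
  then show "b \<in> {n}"
    using mem_supp_mult_le[of k b 1] by simp
qed

lemma bdry_one_atMost: "bdry {1} {..n} \<subseteq> {n, Suc n}"
proof
  fix b
  assume b: "b \<in> bdry {1} {..n}"
  show "b \<in> {n, Suc n}"
  proof (cases "b \<le> n")
    case True
    then show ?thesis
      using b inner_bdry_one_atMost unfolding bdry_def by auto
  next
    case False
    then have "b \<notin> {..n}"
      by simp
    then obtain x k where "x \<in> {1}" "k \<in> {..n}" "b \<le> k + x"
      by (rule bdry_outside_le[OF b])
    then show ?thesis
      using False by simp
  qed
qed

lemma wsize_nonneg: "0 \<le> wsize q A"
  unfolding wsize_def by (simp add: sum_nonneg)

lemma wsize_mono: "finite B \<Longrightarrow> A \<subseteq> B \<Longrightarrow> wsize q A \<le> wsize q B"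
  unfolding wsize_def by (rule sum_mono2) auto

lemma wsize_le_atMost_Max: "finite A \<Longrightarrow> wsize q A \<le> wsize q {..Max A}"
  by (rule wsize_mono) auto

lemma wsize_atMost_Suc: "wsize q {..Suc n} = wsize q {..n} + (dimq q (Suc n))^2"
  by (simp add: wsize_def)

lemma bdd_below_wsize_ratios: "bdd_below {wsize q (B A) / wsize q A | A. P A}"
  by (rule bdd_belowI[of _ 0]) (auto intro: divide_nonneg_nonneg wsize_nonneg)

section \<open>Quantum dimensions and weights of balls\<close>

lemma dimq_eq_sum:
  assumes "0 < q"
  shows "dimq q n = (\<Sum>j\<le>n. q^(2*j)) / q^n"
proof (cases "q = 1")
  case True
  then show ?thesis by (simp add: dimq_def qnum_def)
next
  case False
  have q2: "q^2 \<noteq> 1"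
    using False assms by (simp add: power2_eq_1_iff)
  have "(\<Sum>j\<le>n. q^(2*j)) = (\<Sum>j<Suc n. (q^2)^j)"
    by (simp add: lessThan_Suc_atMost power_mult)
  also have "\<dots> = (1 - (q^2)^Suc n) / (1 - q^2)"
    using q2 by (simp only: sum_gp_strict if_False)
  finally have geom: "(\<Sum>j\<le>n. q^(2*j)) = (1 - (q^2)^Suc n) / (1 - q^2)" .
  have pow: "q powr (real n + 1) = q^Suc n"
    using assms by (simp add: powr_add powr_realpow)
  have "dimq q n = (inverse (q^Suc n) - q^Suc n) / (inverse q - q)"
    using False assms by (simp only: dimq_def qnum_def if_False powr_minus pow of_nat_Suc powr_one)
  also have "\<dots> = (1 - (q^2)^Suc n) / (1 - q^2) / q^n"
  proof -
    have "(q^2)^Suc n = (q * q^n)^2"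
      by (simp flip: power_mult power_Suc add: mult.commute)
    moreover have "1 - q^2 \<noteq> 0" "inverse q - q \<noteq> 0"
      using q2 assms by (auto simp: field_simps power2_eq_square)
    ultimately show ?thesis
      using assms by (simp add: field_simps power2_eq_square)
  qed
  finally show ?thesis by (simp add: geom)
qed

context
  fixes q :: real
  assumes q_pos: "0 < q"
begin

lemma dimq_pos: "0 < dimq q n"
  using q_pos by (simp add: dimq_eq_sum sum_pos)

lemma mult_dimq_Suc: "q * dimq q (Suc n) = dimq q n + q^(n+2)"
proof -
  have "q^(2*n+2) = q^((n+2)+n)"
    by (rule arg_cong[where f="power q"]) simp
  also have "\<dots> = q^(n+2) * q^n"
    by (rule power_add)
  finally have exponents: "q^(2*n+2) = q^(n+2) * q^n" .
  have "q * dimq q (Suc n) = ((\<Sum>j\<le>n. q^(2*j)) + q^(2*n+2)) / q^n"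
    using q_pos by (simp add: dimq_eq_sum)
  also have "\<dots> = (\<Sum>j\<le>n. q^(2*j)) / q^n + q^(n+2)"
    using q_pos by (simp only: exponents add_divide_distrib) simp
  finally show ?thesis
    using q_pos by (simp add: dimq_eq_sum)
qed

lemma dimq_le_mult_Suc: "dimq q n \<le> q * dimq q (Suc n)"
  using mult_dimq_Suc[of n] q_pos by simp

lemma Suc_le_dimq: "real n + 1 \<le> dimq q n"
proof -
  have AM_GM: "2 * q^n \<le> q^(2*j) + q^(2*(n-j))" if "j \<le> n" for j
  proof -
    have "q^j * q^(n-j) = q^n"
      using that by (simp flip: power_add)
    then have "q^(2*j) + q^(2*(n-j)) - 2 * q^n = (q^j - q^(n-j))^2"
      unfolding power_even_eq by (simp add: power2_eq_square algebra_simps)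
    then show ?thesis
      by (metis diff_ge_0_iff_ge zero_le_power2)
  qed
  have "2 * ((real n + 1) * q^n) = (\<Sum>j\<le>n. 2 * q^n)"
    by simp
  also have "\<dots> \<le> (\<Sum>j\<le>n. q^(2*j) + q^(2*(n-j)))"
    by (rule sum_mono) (simp add: AM_GM)
  also have "\<dots> = 2 * (\<Sum>j\<le>n. q^(2*j))"
    using sum.atLeastAtMost_rev[of "\<lambda>j. q^(2*j)" 0 n] by (simp add: sum.distrib atMost_atLeast0)
  finally show ?thesis
    using q_pos by (simp add: dimq_eq_sum field_simps)
qed

lemma dimq_sq_le_mult_Suc: "(dimq q n)^2 \<le> q^2 * (dimq q (Suc n))^2"
  using dimq_le_mult_Suc[of n] dimq_pos[of n] by (simp add: power_mono flip: power_mult_distrib)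

lemma wsize_pos: "finite A \<Longrightarrow> A \<noteq> {} \<Longrightarrow> 0 < wsize q A"
  unfolding wsize_def by (intro sum_pos) (auto simp: dimq_pos[THEN less_imp_neq, THEN not_sym])

lemma wsize_atMost_ge_cube: "(real n + 1)^3 / 3 \<le> wsize q {..n}"
proof (induction n)
  case 0
  then show ?case
    using q_pos by (simp add: wsize_def dimq_eq_sum)
next
  case (Suc n)
  have "(real n + 2)^2 \<le> (dimq q (Suc n))^2"
    using Suc_le_dimq[of "Suc n"] by (intro power_mono) auto
  moreover have "(real (Suc n) + 1)^3 / 3 \<le> (real n + 1)^3 / 3 + (real n + 2)^2"
    by (simp add: power2_eq_square power3_eq_cube field_simps)
  ultimately show ?case
    using Suc.IH by (simp add: wsize_atMost_Suc)
qed

lemma wsize_atMost_le_dimq_sq: "(1 - q^2) * wsize q {..n} \<le> (dimq q n)^2"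
proof (induction n)
  case 0
  then show ?case
    using q_pos by (simp add: wsize_def dimq_eq_sum)
next
  case (Suc n)
  then show ?case
    using dimq_sq_le_mult_Suc[of n] by (simp add: wsize_atMost_Suc algebra_simps)
qed

lemma wsize_atMost_le_dimq_sq_Suc:
  "(1 / q^2 - q^2) * wsize q {..n} \<le> (dimq q n)^2 + (dimq q (Suc n))^2"
proof -
  have "(1 - q^2) * wsize q {..n} \<le> q^2 * (dimq q (Suc n))^2"
    using wsize_atMost_le_dimq_sq[of n] dimq_sq_le_mult_Suc[of n] by linarith
  then have "(1 - q^2) * wsize q {..n} / q^2 \<le> (dimq q (Suc n))^2"
    using q_pos by (simp add: field_simps)
  moreover have "(1 / q^2 - q^2) * wsize q {..n} = (1 - q^2) * wsize q {..n} + (1 - q^2) * wsize q {..n} / q^2"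
    using q_pos by (simp add: field_simps)
  ultimately show ?thesis
    using wsize_atMost_le_dimq_sq[of n] by linarith
qed

lemma sq_le_wsize_atMost:
  assumes "0 \<le> c"
  shows "c * (real n + 1)^2 \<le> 3 * c / (real n + 1) * wsize q {..n}"
proof -
  have "c * (real n + 1)^2 = 3 * c / (real n + 1) * ((real n + 1)^3 / 3)"
    by (simp add: field_simps power2_eq_square power3_eq_cube)
  also have "\<dots> \<le> 3 * c / (real n + 1) * wsize q {..n}"
    using assms wsize_atMost_ge_cube[of n] by (intro mult_left_mono) auto
  finally show ?thesis .
qed

context
  assumes q_le_one: "q \<le> 1"
begin

lemma power_mult_dimq_le: "q^n * dimq q n \<le> real n + 1"
proof -
  have "(\<Sum>j\<le>n. q^(2*j)) \<le> (\<Sum>j\<le>n. 1)"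
    using q_pos q_le_one by (intro sum_mono power_le_one) auto
  then show ?thesis
    using q_pos by (simp add: dimq_eq_sum)
qed

lemma dimq_mono:
  assumes "m \<le> k"
  shows "dimq q m \<le> dimq q k"
proof -
  have "dimq q n \<le> dimq q (Suc n)" for n
    using dimq_le_mult_Suc[of n] dimq_pos[of "Suc n"] q_le_one mult_left_le_one_le[of "dimq q (Suc n)" q] q_pos
    by linarith
  then show ?thesis
    using assms by (rule lift_Suc_mono_le)
qed

lemma dimq_sq_minus_wsize_atMost_le:
  "(dimq q n)^2 - (1 - q^2) * wsize q {..n} \<le> 2 * (real n + 1)^2"
proof (induction n)
  case 0
  have "q^2 \<le> 1"
    using q_pos q_le_one by (simp add: power_le_one)
  then show ?case
    using q_pos by (simp add: wsize_def dimq_eq_sum)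
next
  case (Suc n)
  let ?d = "dimq q n" and ?D = "dimq q (Suc n)"
  have "q^2 * ?D^2 - ?d^2 = (q * ?D - ?d) * (q * ?D + ?d)"
    by (simp add: power2_eq_square algebra_simps)
  also have "\<dots> = q^(n+2) * (q * ?D + ?d)"
    using mult_dimq_Suc[of n] by simp
  also have "\<dots> \<le> q^(n+2) * (2 * ?D)"
  proof -
    have "q * ?D \<le> ?D"
      using q_pos q_le_one dimq_pos[of "Suc n"] by (intro mult_left_le_one_le) auto
    then have "q * ?D + ?d \<le> 2 * ?D"
      using dimq_mono[of n "Suc n"] by linarith
    then show ?thesis
      using q_pos by (intro mult_left_mono) auto
  qed
  also have "\<dots> = 2 * q * (q^Suc n * ?D)"
    by simp
  also have "\<dots> \<le> 2 * (real n + 2)"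
  proof -
    have "q * (q^Suc n * ?D) \<le> 1 * (real n + 2)"
      using power_mult_dimq_le[of "Suc n"] q_pos q_le_one dimq_pos[of "Suc n"]
      by (intro mult_mono) auto
    then show ?thesis
      by simp
  qed
  finally have step: "q^2 * ?D^2 - ?d^2 \<le> 2 * (real n + 2)" .
  have "?D^2 - (1 - q^2) * wsize q {..Suc n}
      = (?d^2 - (1 - q^2) * wsize q {..n}) + (q^2 * ?D^2 - ?d^2)"
    by (simp add: wsize_atMost_Suc algebra_simps)
  moreover have "2 * (real n + 1)^2 + 2 * (real n + 2) \<le> 2 * (real (Suc n) + 1)^2"
    by (simp add: power2_eq_square algebra_simps)
  ultimately show ?case
    using Suc.IH step by linarith
qed

lemma dimq_sq_le_wsize_atMost:
  "(dimq q n)^2 \<le> (1 - q^2 + 6 / (real n + 1)) * wsize q {..n}"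
  using dimq_sq_minus_wsize_atMost_le[of n] sq_le_wsize_atMost[of 2 n]
  by (simp add: algebra_simps)

lemma dimq_sq_Suc_le_wsize_atMost:
  "(dimq q n)^2 + (dimq q (Suc n))^2
    \<le> (1 / q^2 - q^2 + (6 + 24 / q^2) / (real n + 1)) * wsize q {..n}"
proof -
  define E where "E k = (dimq q k)^2 - (1 - q^2) * wsize q {..k}" for k
  have "E (Suc n) \<le> 2 * (real (Suc n) + 1)^2"
    unfolding E_def by (rule dimq_sq_minus_wsize_atMost_le)
  also have "\<dots> \<le> 8 * (real n + 1)^2"
    by (simp add: power2_eq_square algebra_simps)
  finally have "E (Suc n) / q^2 \<le> 8 / q^2 * (real n + 1)^2"
    using q_pos by (simp add: divide_right_mono)
  moreover have "E n \<le> 2 * (real n + 1)^2"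
    unfolding E_def by (rule dimq_sq_minus_wsize_atMost_le)
  moreover have "(2 + 8 / q^2) * (real n + 1)^2 = 2 * (real n + 1)^2 + 8 / q^2 * (real n + 1)^2"
    by (rule distrib_right)
  ultimately have E_bound: "E n + E (Suc n) / q^2 \<le> (2 + 8 / q^2) * (real n + 1)^2"
    by linarith
  have "(dimq q n)^2 + (dimq q (Suc n))^2 = (1 / q^2 - q^2) * wsize q {..n} + E n + E (Suc n) / q^2"
    using q_pos by (simp add: E_def wsize_atMost_Suc field_simps)
  also have "\<dots> \<le> (1 / q^2 - q^2) * wsize q {..n} + (2 + 8 / q^2) * (real n + 1)^2"
    using E_bound by simp
  also have "\<dots> \<le> (1 / q^2 - q^2) * wsize q {..n} + 3 * (2 + 8 / q^2) / (real n + 1) * wsize q {..n}"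
    using sq_le_wsize_atMost[of "2 + 8 / q^2" n] by simp
  finally show ?thesis
    by (simp add: algebra_simps)
qed

section \<open>Boundary ratios\<close>

lemma inner_bdry_ratio_ge:
  assumes "finite A" "A \<noteq> {}" "x \<in> X" "x \<noteq> 0"
  shows "1 - q^2 \<le> wsize q (inner_bdry X A) / wsize q A"
proof -
  let ?m = "Max A"
  have "0 \<le> 1 - q^2"
    using q_pos q_le_one by (simp add: power_le_one)
  then have "(1 - q^2) * wsize q A \<le> (1 - q^2) * wsize q {..?m}"
    using assms(1) by (intro mult_left_mono wsize_le_atMost_Max)
  also have "\<dots> \<le> (dimq q ?m)^2"
    by (rule wsize_atMost_le_dimq_sq)
  also have "\<dots> = wsize q {?m}"
    by (simp add: wsize_def)
  also have "\<dots> \<le> wsize q (inner_bdry X A)"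
    using Max_mem_inner_bdry[OF assms] assms(1) by (intro wsize_mono) (auto simp: inner_bdry_def)
  finally show ?thesis
    using wsize_pos[OF assms(1,2)] by (simp add: le_divide_eq)
qed

lemma bdry_ratio_ge:
  assumes "finite A" "A \<noteq> {}" "finite X" "x \<in> X" "x \<noteq> 0"
  shows "1 / q^2 - q^2 \<le> wsize q (bdry X A) / wsize q A"
proof -
  let ?m = "Max A"
  have "q^2 \<le> 1"
    using q_pos q_le_one by (simp add: power_le_one)
  moreover have "1 \<le> 1 / q^2"
    using q_pos \<open>q^2 \<le> 1\<close> by simp
  ultimately have "(1 / q^2 - q^2) * wsize q A \<le> (1 / q^2 - q^2) * wsize q {..?m}"
    using assms(1) by (intro mult_left_mono wsize_le_atMost_Max) auto
  also have "\<dots> \<le> (dimq q ?m)^2 + (dimq q (Suc ?m))^2"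
    by (rule wsize_atMost_le_dimq_sq_Suc)
  also have "\<dots> \<le> (dimq q ?m)^2 + (dimq q (?m + x))^2"
    using dimq_mono[of "Suc ?m" "?m + x"] dimq_pos[of "Suc ?m"] assms(5) by (simp add: power_mono)
  also have "\<dots> = wsize q {?m, ?m + x}"
    using assms(5) by (simp add: wsize_def)
  also have "\<dots> \<le> wsize q (bdry X A)"
    using Max_mem_inner_bdry[OF assms(1,2,4,5)] Max_add_mem_bdry[OF assms(1,2,4,5)]
      finite_bdry[OF assms(1,3)]
    by (intro wsize_mono) (auto simp: bdry_def)
  finally show ?thesis
    using wsize_pos[OF assms(1,2)] by (simp add: le_divide_eq)
qed

lemma Fol_inn_X_ge:
  assumes "gen_set X"
  shows "1 - q^2 \<le> Fol_inn_X q X"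
proof -
  obtain x where "x \<in> X" "x \<noteq> 0"
    using assms by (rule gen_set_ex_nonzero)
  then show ?thesis
    unfolding Fol_inn_X_def by (intro cInf_greatest) (auto intro: inner_bdry_ratio_ge)
qed

lemma Fol_X_ge:
  assumes "gen_set X"
  shows "1 / q^2 - q^2 \<le> Fol_X q X"
proof -
  obtain x where "x \<in> X" "x \<noteq> 0"
    using assms by (rule gen_set_ex_nonzero)
  moreover have "finite X"
    using assms by (simp add: gen_set_def)
  ultimately show ?thesis
    unfolding Fol_X_def by (intro cInf_greatest) (auto intro: bdry_ratio_ge)
qed

lemma Fol_inn_X_one_le: "Fol_inn_X q {1} \<le> 1 - q^2"
proof -
  have ratio_le: "wsize q (inner_bdry {1} {..n}) / wsize q {..n} \<le> 1 - q^2 + 6 / (real n + 1)" for n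
  proof -
    have "wsize q (inner_bdry {1} {..n}) \<le> wsize q {n}"
      using inner_bdry_one_atMost by (rule wsize_mono[rotated]) simp
    also have "\<dots> \<le> (1 - q^2 + 6 / (real n + 1)) * wsize q {..n}"
      using dimq_sq_le_wsize_atMost by (simp add: wsize_def)
    finally show ?thesis
      using wsize_pos[of "{..n}"] by (simp add: divide_le_eq)
  qed
  show ?thesis
    unfolding Fol_inn_X_def
    by (rule cInf_le_lim[OF bdd_below_wsize_ratios _ ratio_le tendsto_add_const_over_Suc]) blast
qed

lemma Fol_X_one_le: "Fol_X q {1} \<le> 1 / q^2 - q^2"
proof -
  have ratio_le:
    "wsize q (bdry {1} {..n}) / wsize q {..n} \<le> 1 / q^2 - q^2 + (6 + 24 / q^2) / (real n + 1)" for n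
  proof -
    have "wsize q (bdry {1} {..n}) \<le> wsize q {n, Suc n}"
      using bdry_one_atMost by (rule wsize_mono[rotated]) simp
    also have "\<dots> \<le> (1 / q^2 - q^2 + (6 + 24 / q^2) / (real n + 1)) * wsize q {..n}"
      using dimq_sq_Suc_le_wsize_atMost by (simp add: wsize_def)
    finally show ?thesis
      using wsize_pos[of "{..n}"] by (simp add: divide_le_eq)
  qed
  show ?thesis
    unfolding Fol_X_def
    by (rule cInf_le_lim[OF bdd_below_wsize_ratios _ ratio_le tendsto_add_const_over_Suc]) blast
qed

end

end

theorem proposition4p4:
  fixes q :: real
  assumes "0 < q" and "q \<le> 1"
  shows "Fol_inn q = 1 - q^2 \<and> Fol q = 1 / q^2 - q^2"
proof
  have "1 - q^2 = Fol_inn_X q {1}"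
    using Fol_inn_X_ge[OF assms gen_set_one] Fol_inn_X_one_le[OF assms] by linarith
  then show "Fol_inn q = 1 - q^2"
    unfolding Fol_inn_def using gen_set_one Fol_inn_X_ge[OF assms]
    by (intro cInf_eq_minimum) blast+
  have "1 / q^2 - q^2 = Fol_X q {1}"
    using Fol_X_ge[OF assms gen_set_one] Fol_X_one_le[OF assms] by linarith
  then show "Fol q = 1 / q^2 - q^2"
    unfolding Fol_def using gen_set_one Fol_X_ge[OF assms]
    by (intro cInf_eq_minimum) blast+
qed

end
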